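(* Let $q$ be a complex number with $|q|<1$. Then \[ \sum_{n\geq 0} q^{2n} (q^{4n+4};q^4)_\infty (q;q)_{2n+1} = \frac{2(1-q)(q^4;q^4)_\infty}{1+q^3}- \frac{(q;q)_\infty}{1+q^3}, \] and \[ (1+q^3) \sum_{n\geq 0} \frac{(-q^2;q^2)_n\, q^{4n+2}}{(q;q^2)_{n+1}} = \frac{(q^4;q^4)_\infty}{(q^2;q)_\infty}-1 . \]
   Context: For a complex number $a$ and $|q|<1$: $(a;q)_0=1$, $(a;q)_n=\prod_{j=0}^{n-1}(1-aq^j)$ for integers $n\ge 1$, and $(a;q)_\infty=\prod_{j=0}^{\infty}(1-aq^j)$. *)

theory Defs
  imports "HOL-Analysis.Analysis"
begin

definition qpoch :: "complex \<Rightarrow> complex \<Rightarrow> nat \<Rightarrow> complex" where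
  "qpoch a q n = (\<Prod>j<n. 1 - a * q ^ j)"

definition qpoch_inf :: "complex \<Rightarrow> complex \<Rightarrow> complex" where
  "qpoch_inf a q = lim (\<lambda>n. qpoch a q n)"

end

theory Submission
  imports Defs
begin

(* Both series telescope. Put r n = (q;q^2)_n / (-q^2;q^2)_n. The finite identity
   (q;q)_2n (-q^2;q^2)_n = (q;q^2)_n (q^4;q^4)_n turns the n-th term of the first series into
   (q^4;q^4)_oo q^2n (1 - q^(2n+1)) r n, and (1 + q^3) times this is G (n+1) - G n for
   G n = (q^(4n+1) + (q - 1) q^2n - 1) r n. Likewise (1 + q^3) times the n-th term of the second
   series is H (n+1) - H n for H n = (1 - q + q^(2n+1)) / r n. The limits of G and H are evaluated
   with (q;q)_oo (-q^2;q^2)_oo = (q;q^2)_oo (q^4;q^4)_oo and (q;q)_oo = (1 - q) (q^2;q)_oo. *)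

lemma qpoch_0 [simp]: "qpoch a q 0 = 1"
  by (simp add: qpoch_def)

lemma qpoch_Suc: "qpoch a q (Suc n) = qpoch a q n * (1 - a * q ^ n)"
  by (simp add: qpoch_def)

lemma qpoch_add: "qpoch a q (n + m) = qpoch a q n * qpoch (a * q ^ n) q m"
  by (induction m) (simp_all add: qpoch_Suc power_add mult_ac)

lemma qpoch_double: "qpoch a q (2 * n) = qpoch a (q\<^sup>2) n * qpoch (a * q) (q\<^sup>2) n"
proof (induction n)
  case (Suc n)
  have "2 * Suc n = Suc (Suc (2 * n))" by simp
  moreover have "(q\<^sup>2) ^ n = q ^ (2 * n)"
    by (simp add: power_mult)
  ultimately show ?case
    using Suc.IH by (simp add: qpoch_Suc mult_ac)
qed simp

lemma qpoch_mult_qpoch_minus: "qpoch a q n * qpoch (- a) q n = qpoch (a\<^sup>2) (q\<^sup>2) n"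
proof (induction n)
  case (Suc n)
  have "(1 - a * q ^ n) * (1 + a * q ^ n) = 1 - a\<^sup>2 * (q\<^sup>2) ^ n"
    by (simp add: power_mult_distrib power_mult[symmetric] mult.commute algebra_simps power2_eq_square)
  with Suc.IH show ?case
    by (simp add: qpoch_Suc mult_ac)
qed simp

lemma qpoch_factor_nonzero:
  fixes a q :: complex
  assumes "norm a < 1" "norm q \<le> 1"
  shows "1 - a * q ^ j \<noteq> 0"
proof -
  have "norm a * norm q ^ j \<le> norm a"
    using assms by (simp add: mult_left_le power_le_one)
  with assms have "norm (a * q ^ j) < 1"
    by (simp add: norm_mult norm_power)
  then show ?thesis
    by (metis eq_iff_diff_eq_0 norm_one order.irrefl)
qed

lemma qpoch_nonzero:
  fixes a q :: complex
  assumes "norm a < 1" "norm q \<le> 1"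
  shows "qpoch a q n \<noteq> 0"
  using qpoch_factor_nonzero[OF assms] by (simp add: qpoch_def)

lemma norm_power_less_one: "norm (q::complex) < 1 \<Longrightarrow> 0 < k \<Longrightarrow> norm (q ^ k) < 1"
  by (simp add: norm_power power_less_one_iff)

lemma qpoch_tendsto_prodinf:
  fixes a q :: complex
  assumes "norm q < 1"
  shows "convergent_prod (\<lambda>j. 1 - a * q ^ j)"
    and "(\<lambda>n. qpoch a q n) \<longlonglongrightarrow> prodinf (\<lambda>j. 1 - a * q ^ j)"
proof -
  have "summable (\<lambda>j. norm a * norm q ^ j)"
    using assms by (intro summable_mult summable_geometric) simp
  then have "summable (\<lambda>j. norm ((1 - a * q ^ j) - 1))"
    by (simp add: norm_mult norm_power)
  then show conv: "convergent_prod (\<lambda>j. 1 - a * q ^ j)"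
    by (intro abs_convergent_prod_imp_convergent_prod summable_imp_abs_convergent_prod)
  have "(\<lambda>n. qpoch a q (Suc n)) \<longlonglongrightarrow> prodinf (\<lambda>j. 1 - a * q ^ j)"
    using convergent_prod_LIMSEQ[OF conv] by (simp add: qpoch_def lessThan_Suc_atMost)
  then show "(\<lambda>n. qpoch a q n) \<longlonglongrightarrow> prodinf (\<lambda>j. 1 - a * q ^ j)"
    by (rule LIMSEQ_imp_Suc)
qed

lemma qpoch_inf_eq_prodinf:
  "norm q < 1 \<Longrightarrow> qpoch_inf a q = prodinf (\<lambda>j. 1 - a * q ^ j)"
  unfolding qpoch_inf_def by (rule limI) (rule qpoch_tendsto_prodinf)

lemma qpoch_tendsto_qpoch_inf:
  "norm q < 1 \<Longrightarrow> (\<lambda>n. qpoch a q n) \<longlonglongrightarrow> qpoch_inf a q"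
  using qpoch_tendsto_prodinf(2) qpoch_inf_eq_prodinf by metis

lemma qpoch_inf_nonzero:
  fixes a q :: complex
  assumes "norm a < 1" "norm q < 1"
  shows "qpoch_inf a q \<noteq> 0"
proof -
  have "1 - a * q ^ j \<noteq> 0" for j
    using qpoch_factor_nonzero[OF assms(1) less_imp_le[OF assms(2)]] .
  then show ?thesis
    using assms by (simp add: qpoch_inf_eq_prodinf prodinf_nonzero qpoch_tendsto_prodinf(1))
qed

lemma qpoch_inf_shift:
  assumes "norm q < 1"
  shows "qpoch_inf a q = qpoch a q n * qpoch_inf (a * q ^ n) q"
proof -
  have "(\<lambda>m. qpoch a q (m + n)) \<longlonglongrightarrow> qpoch_inf a q"
    using qpoch_tendsto_qpoch_inf[OF assms] by (rule LIMSEQ_ignore_initial_segment)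
  moreover have "(\<lambda>m. qpoch a q (m + n)) \<longlonglongrightarrow> qpoch a q n * qpoch_inf (a * q ^ n) q"
    unfolding add.commute[of _ n] qpoch_add
    by (intro tendsto_mult tendsto_const qpoch_tendsto_qpoch_inf assms)
  ultimately show ?thesis
    by (rule LIMSEQ_unique)
qed

lemma qpoch_inf_double:
  assumes "norm q < 1"
  shows "qpoch_inf a q = qpoch_inf a (q\<^sup>2) * qpoch_inf (a * q) (q\<^sup>2)"
proof -
  have "strict_mono (\<lambda>n::nat. 2 * n)"
    by (simp add: strict_mono_def)
  then have "(\<lambda>n. qpoch a q (2 * n)) \<longlonglongrightarrow> qpoch_inf a q"
    using LIMSEQ_subseq_LIMSEQ[OF qpoch_tendsto_qpoch_inf[OF assms]] by (simp add: o_def)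
  moreover have "(\<lambda>n. qpoch a q (2 * n)) \<longlonglongrightarrow> qpoch_inf a (q\<^sup>2) * qpoch_inf (a * q) (q\<^sup>2)"
    unfolding qpoch_double using norm_power_less_one[OF assms, of 2]
    by (intro tendsto_mult qpoch_tendsto_qpoch_inf) simp_all
  ultimately show ?thesis
    by (rule LIMSEQ_unique)
qed

lemma qpoch_inf_mult_qpoch_inf_minus:
  assumes "norm q < 1"
  shows "qpoch_inf a q * qpoch_inf (- a) q = qpoch_inf (a\<^sup>2) (q\<^sup>2)"
proof -
  have "(\<lambda>n. qpoch a q n * qpoch (- a) q n) \<longlonglongrightarrow> qpoch_inf (a\<^sup>2) (q\<^sup>2)"
    unfolding qpoch_mult_qpoch_minus using norm_power_less_one[OF assms, of 2]
    by (intro qpoch_tendsto_qpoch_inf) simp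
  moreover have "(\<lambda>n. qpoch a q n * qpoch (- a) q n) \<longlonglongrightarrow> qpoch_inf a q * qpoch_inf (- a) q"
    using assms by (intro tendsto_mult qpoch_tendsto_qpoch_inf)
  ultimately show ?thesis
    using LIMSEQ_unique by metis
qed

lemma qpoch_q_q_double_mult:
  "qpoch q q (2 * n) * qpoch (- (q\<^sup>2)) (q\<^sup>2) n = qpoch (q ^ 4) (q ^ 4) n * qpoch q (q\<^sup>2) n"
proof -
  have "qpoch q q (2 * n) = qpoch q (q\<^sup>2) n * qpoch (q\<^sup>2) (q\<^sup>2) n"
    by (simp add: qpoch_double power2_eq_square)
  moreover have "qpoch (q\<^sup>2) (q\<^sup>2) n * qpoch (- (q\<^sup>2)) (q\<^sup>2) n = qpoch (q ^ 4) (q ^ 4) n"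
    by (simp add: qpoch_mult_qpoch_minus flip: power_mult)
  ultimately show ?thesis
    by (simp add: mult_ac)
qed

lemma qpoch_inf_q_q_mult:
  fixes q :: complex
  assumes "norm q < 1"
  shows "qpoch_inf q q * qpoch_inf (- (q\<^sup>2)) (q\<^sup>2) = qpoch_inf (q ^ 4) (q ^ 4) * qpoch_inf q (q\<^sup>2)"
proof -
  have "qpoch_inf q q = qpoch_inf q (q\<^sup>2) * qpoch_inf (q\<^sup>2) (q\<^sup>2)"
    using qpoch_inf_double[OF assms] by (simp add: power2_eq_square)
  moreover have "qpoch_inf (q\<^sup>2) (q\<^sup>2) * qpoch_inf (- (q\<^sup>2)) (q\<^sup>2) = qpoch_inf (q ^ 4) (q ^ 4)"
    using qpoch_inf_mult_qpoch_inf_minus[OF norm_power_less_one[OF assms]] by (simp flip: power_mult)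
  ultimately show ?thesis
    by (simp add: mult_ac)
qed

definition qpoch_ratio :: "complex \<Rightarrow> nat \<Rightarrow> complex" where
  "qpoch_ratio q n = qpoch q (q\<^sup>2) n / qpoch (- (q\<^sup>2)) (q\<^sup>2) n"

lemma qpoch_ratio_nonzero:
  assumes "norm q < 1"
  shows "qpoch_ratio q n \<noteq> 0"
proof -
  have "norm (q\<^sup>2) < 1"
    using assms by (rule norm_power_less_one) simp
  then show ?thesis
    using assms by (simp add: qpoch_ratio_def qpoch_nonzero)
qed

lemma qpoch_ratio_Suc:
  assumes "norm q < 1"
  shows "qpoch_ratio q (Suc n) * (1 + q\<^sup>2 * (q\<^sup>2) ^ n) = qpoch_ratio q n * (1 - q * (q\<^sup>2) ^ n)"
proof -
  have "norm (q\<^sup>2) < 1"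
    using assms by (rule norm_power_less_one) simp
  then have "1 + q\<^sup>2 * (q\<^sup>2) ^ n \<noteq> 0"
    using qpoch_factor_nonzero[of "- (q\<^sup>2)" "q\<^sup>2" n] by simp
  moreover have "qpoch_ratio q (Suc n) = qpoch_ratio q n * ((1 - q * (q\<^sup>2) ^ n) / (1 + q\<^sup>2 * (q\<^sup>2) ^ n))"
    by (simp add: qpoch_ratio_def qpoch_Suc)
  ultimately show ?thesis
    by simp
qed

lemma qpoch_ratio_tendsto:
  assumes "norm q < 1"
  shows "qpoch_ratio q \<longlonglongrightarrow> qpoch_inf q (q\<^sup>2) / qpoch_inf (- (q\<^sup>2)) (q\<^sup>2)"
  unfolding qpoch_ratio_def[abs_def] using assms norm_power_less_one[OF assms, of 2]
  by (intro tendsto_divide qpoch_tendsto_qpoch_inf qpoch_inf_nonzero) simp_all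

lemma qpoch_q_q_double_eq_ratio:
  assumes "norm q < 1"
  shows "qpoch q q (2 * n) = qpoch (q ^ 4) (q ^ 4) n * qpoch_ratio q n"
proof -
  have "norm (q\<^sup>2) < 1"
    using assms by (rule norm_power_less_one) simp
  then have "qpoch (- (q\<^sup>2)) (q\<^sup>2) n \<noteq> 0"
    by (simp add: qpoch_nonzero)
  then show ?thesis
    using qpoch_q_q_double_mult[of q n] by (simp add: qpoch_ratio_def field_simps)
qed

lemma first_summand_eq:
  fixes q :: complex
  assumes "norm q < 1"
  shows "q ^ (2*n) * qpoch_inf (q ^ (4*n+4)) (q ^ 4) * qpoch q q (2*n+1)
    = qpoch_inf (q ^ 4) (q ^ 4) * ((q\<^sup>2) ^ n * (1 - q * (q\<^sup>2) ^ n) * qpoch_ratio q n)"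
proof -
  have tail: "qpoch_inf (q ^ 4) (q ^ 4) = qpoch (q ^ 4) (q ^ 4) n * qpoch_inf (q ^ (4*n+4)) (q ^ 4)"
    using qpoch_inf_shift[OF norm_power_less_one[OF assms], of 4 "q ^ 4" n]
    by (simp add: power_add mult.commute flip: power_mult)
  have head: "qpoch q q (2*n+1) = qpoch (q ^ 4) (q ^ 4) n * qpoch_ratio q n * (1 - q * (q\<^sup>2) ^ n)"
    using qpoch_q_q_double_eq_ratio[OF assms, of n] by (simp add: qpoch_Suc power_mult)
  have "q ^ (2*n) = (q\<^sup>2) ^ n"
    by (simp add: power_mult)
  then show ?thesis
    unfolding tail head by (simp add: mult_ac)
qed

lemma first_series_telescoping:
  fixes q :: complex
  assumes q: "norm q < 1"
  defines "G \<equiv> \<lambda>n. (q * (q ^ 4) ^ n + (q - 1) * (q\<^sup>2) ^ n - 1) * qpoch_ratio q n"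
  shows "(1 + q ^ 3) * ((q\<^sup>2) ^ n * (1 - q * (q\<^sup>2) ^ n) * qpoch_ratio q n) = G (Suc n) - G n"
proof -
  define x where "x = q ^ n"
  define r where "r = qpoch_ratio q n"
  define r' where "r' = qpoch_ratio q (Suc n)"
  have powers: "(q\<^sup>2) ^ n = x\<^sup>2" "(q ^ 4) ^ n = x ^ 4"
    by (simp_all add: x_def flip: power_mult) (simp_all add: mult.commute)
  have step: "r' * (1 + q\<^sup>2 * x\<^sup>2) = r * (1 - q * x\<^sup>2)"
    using qpoch_ratio_Suc[OF q, of n] by (simp add: r_def r'_def powers)
  have "(1 + q\<^sup>2 * x\<^sup>2) * ((q ^ 5 * x ^ 4 + (q - 1) * q\<^sup>2 * x\<^sup>2 - 1) * r'
          - (q * x ^ 4 + (q - 1) * x\<^sup>2 - 1) * r)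
      = (q ^ 5 * x ^ 4 + (q - 1) * q\<^sup>2 * x\<^sup>2 - 1) * (r' * (1 + q\<^sup>2 * x\<^sup>2))
          - (1 + q\<^sup>2 * x\<^sup>2) * (q * x ^ 4 + (q - 1) * x\<^sup>2 - 1) * r"
    by (simp add: algebra_simps)
  also have "\<dots> = (1 + q\<^sup>2 * x\<^sup>2) * ((1 + q ^ 3) * (x\<^sup>2 * (1 - q * x\<^sup>2) * r))"
    unfolding step by algebra
  finally have "(1 + q\<^sup>2 * x\<^sup>2) * ((1 + q ^ 3) * (x\<^sup>2 * (1 - q * x\<^sup>2) * r))
      = (1 + q\<^sup>2 * x\<^sup>2) * ((q ^ 5 * x ^ 4 + (q - 1) * q\<^sup>2 * x\<^sup>2 - 1) * r'
          - (q * x ^ 4 + (q - 1) * x\<^sup>2 - 1) * r)" ..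
  moreover have "norm (q\<^sup>2) < 1"
    using q by (rule norm_power_less_one) simp
  then have "1 + q\<^sup>2 * x\<^sup>2 \<noteq> 0"
    using qpoch_factor_nonzero[of "- (q\<^sup>2)" "q\<^sup>2" n] by (simp add: powers)
  moreover have "q ^ 5 = q * q ^ 4"
    by (simp add: eval_nat_numeral)
  ultimately show ?thesis
    by (simp add: G_def powers r_def r'_def)
qed

lemma one_plus_cube_nonzero: "norm (q::complex) < 1 \<Longrightarrow> 1 + q ^ 3 \<noteq> 0"
  using norm_power_less_one[of q 3] by (auto simp: add_eq_0_iff)

lemma first_series_sums:
  fixes q :: complex
  assumes q: "norm q < 1"
  shows "(\<lambda>n. q ^ (2*n) * qpoch_inf (q ^ (4*n+4)) (q ^ 4) * qpoch q q (2*n+1))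
    sums (2 * (1 - q) * qpoch_inf (q ^ 4) (q ^ 4) / (1 + q ^ 3) - qpoch_inf q q / (1 + q ^ 3))"
proof -
  define A where "A = qpoch_inf q (q\<^sup>2)"
  define B where "B = qpoch_inf (- (q\<^sup>2)) (q\<^sup>2)"
  define P where "P = qpoch_inf (q ^ 4) (q ^ 4)"
  define G where "G = (\<lambda>n. (q * (q ^ 4) ^ n + (q - 1) * (q\<^sup>2) ^ n - 1) * qpoch_ratio q n)"
  have q2: "norm (q\<^sup>2) < 1" and q4: "norm (q ^ 4) < 1"
    using q by (simp_all add: norm_power_less_one)
  have "G \<longlonglongrightarrow> (q * 0 + (q - 1) * 0 - 1) * (A / B)"
    unfolding G_def A_def B_def
    by (intro tendsto_intros LIMSEQ_power_zero qpoch_ratio_tendsto q q2 q4)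
  then have "(\<lambda>n. G (Suc n) - G n) sums (- (A / B) - G 0)"
    using telescope_sums by simp
  moreover have "G 0 = 2 * q - 2"
    by (simp add: G_def qpoch_ratio_def)
  moreover have "(\<lambda>n. G (Suc n) - G n)
      = (\<lambda>n. (1 + q ^ 3) * ((q\<^sup>2) ^ n * (1 - q * (q\<^sup>2) ^ n) * qpoch_ratio q n))"
    by (simp add: G_def first_series_telescoping[OF q])
  ultimately have "(\<lambda>n. (1 + q ^ 3) * ((q\<^sup>2) ^ n * (1 - q * (q\<^sup>2) ^ n) * qpoch_ratio q n))
      sums (2 * (1 - q) - A / B)"
    by (simp add: algebra_simps)
  then have "(\<lambda>n. P / (1 + q ^ 3) * ((1 + q ^ 3) * ((q\<^sup>2) ^ n * (1 - q * (q\<^sup>2) ^ n) * qpoch_ratio q n)))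
      sums (P / (1 + q ^ 3) * (2 * (1 - q) - A / B))"
    by (rule sums_mult)
  moreover have "P / (1 + q ^ 3) * ((1 + q ^ 3) * ((q\<^sup>2) ^ n * (1 - q * (q\<^sup>2) ^ n) * qpoch_ratio q n))
      = q ^ (2*n) * qpoch_inf (q ^ (4*n+4)) (q ^ 4) * qpoch q q (2*n+1)" for n
    unfolding first_summand_eq[OF q] using one_plus_cube_nonzero[OF q] by (simp add: P_def)
  moreover have "B \<noteq> 0"
    using q2 q by (simp add: B_def qpoch_inf_nonzero)
  then have "P * (A / B) = qpoch_inf q q"
    using qpoch_inf_q_q_mult[OF q] by (simp add: A_def B_def P_def field_simps)
  then have "P / (1 + q ^ 3) * (2 * (1 - q) - A / B)
      = 2 * (1 - q) * P / (1 + q ^ 3) - qpoch_inf q q / (1 + q ^ 3)"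
    by (simp add: diff_divide_distrib right_diff_distrib mult_ac)
  ultimately show ?thesis
    by (simp add: P_def)
qed

lemma second_summand_eq:
  "qpoch (- (q\<^sup>2)) (q\<^sup>2) n * q ^ (4*n+2) / qpoch q (q\<^sup>2) (n+1)
    = q\<^sup>2 * (q ^ 4) ^ n / ((1 - q * (q\<^sup>2) ^ n) * qpoch_ratio q n)"
proof -
  have "q ^ (4*n+2) = q\<^sup>2 * (q ^ 4) ^ n"
    unfolding power_add power_mult by (rule mult.commute)
  moreover have "qpoch q (q\<^sup>2) (n+1) = qpoch q (q\<^sup>2) n * (1 - q * (q\<^sup>2) ^ n)"
    by (simp add: qpoch_Suc)
  ultimately show ?thesis
    unfolding qpoch_ratio_def by (simp only:) (simp add: mult_ac)
qed

lemma second_series_telescoping: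
  fixes q :: complex
  assumes q: "norm q < 1"
  defines "H \<equiv> \<lambda>n. (1 - q + q * (q\<^sup>2) ^ n) / qpoch_ratio q n"
  shows "(1 + q ^ 3) * (q\<^sup>2 * (q ^ 4) ^ n / ((1 - q * (q\<^sup>2) ^ n) * qpoch_ratio q n))
    = H (Suc n) - H n"
proof -
  define x where "x = q ^ n"
  define r where "r = qpoch_ratio q n"
  define r' where "r' = qpoch_ratio q (Suc n)"
  have powers: "(q\<^sup>2) ^ n = x\<^sup>2" "(q ^ 4) ^ n = x ^ 4"
    by (simp_all add: x_def flip: power_mult) (simp_all add: mult.commute)
  have step: "r' * (1 + q\<^sup>2 * x\<^sup>2) = r * (1 - q * x\<^sup>2)"
    using qpoch_ratio_Suc[OF q, of n] by (simp add: r_def r'_def powers)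
  have "norm (q\<^sup>2) < 1"
    using q by (rule norm_power_less_one) simp
  then have "1 - q * x\<^sup>2 \<noteq> 0"
    using q qpoch_factor_nonzero[of q "q\<^sup>2" n] by (simp add: powers)
  moreover have "r \<noteq> 0" "r' \<noteq> 0"
    using qpoch_ratio_nonzero[OF q] by (simp_all add: r_def r'_def)
  ultimately have inv: "1 / r' = (1 + q\<^sup>2 * x\<^sup>2) / (r * (1 - q * x\<^sup>2))"
    using step by (simp add: field_simps)
  have "(1 - q + q * (q\<^sup>2 * x\<^sup>2)) / r' - (1 - q + q * x\<^sup>2) / r
      = (1 - q + q * (q\<^sup>2 * x\<^sup>2)) * (1 / r') - (1 - q + q * x\<^sup>2) / r"
    by simp
  also have "\<dots> = ((1 - q + q * (q\<^sup>2 * x\<^sup>2)) * (1 + q\<^sup>2 * x\<^sup>2) - (1 - q + q * x\<^sup>2) * (1 - q * x\<^sup>2))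
        / (r * (1 - q * x\<^sup>2))"
    unfolding inv using \<open>r \<noteq> 0\<close> \<open>1 - q * x\<^sup>2 \<noteq> 0\<close> by (simp add: field_simps)
  also have "\<dots> = (1 + q ^ 3) * (q\<^sup>2 * x ^ 4 / ((1 - q * x\<^sup>2) * r))"
    by (simp add: mult.commute) algebra
  finally show ?thesis
    unfolding H_def power_Suc powers r_def[symmetric] r'_def[symmetric] ..
qed

lemma second_series_sums:
  fixes q :: complex
  assumes q: "norm q < 1"
  shows "(\<lambda>n. qpoch (- (q\<^sup>2)) (q\<^sup>2) n * q ^ (4*n+2) / qpoch q (q\<^sup>2) (n+1))
    sums ((qpoch_inf (q ^ 4) (q ^ 4) / qpoch_inf (q\<^sup>2) q - 1) / (1 + q ^ 3))"
proof -
  define A where "A = qpoch_inf q (q\<^sup>2)"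
  define B where "B = qpoch_inf (- (q\<^sup>2)) (q\<^sup>2)"
  define H where "H = (\<lambda>n. (1 - q + q * (q\<^sup>2) ^ n) / qpoch_ratio q n)"
  have q2: "norm (q\<^sup>2) < 1"
    using q by (simp add: norm_power_less_one)
  have A: "A \<noteq> 0" and B: "B \<noteq> 0"
    using q q2 by (simp_all add: A_def B_def qpoch_inf_nonzero)
  have "H \<longlonglongrightarrow> (1 - q + q * 0) / (A / B)"
    unfolding H_def using A B unfolding A_def B_def
    by (intro tendsto_intros LIMSEQ_power_zero qpoch_ratio_tendsto q q2) simp
  then have "(\<lambda>n. H (Suc n) - H n) sums ((1 - q) * B / A - H 0)"
    using telescope_sums by simp
  moreover have "H 0 = 1"
    by (simp add: H_def qpoch_ratio_def)
  moreover have "H (Suc n) - H n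
      = (1 + q ^ 3) * (qpoch (- (q\<^sup>2)) (q\<^sup>2) n * q ^ (4*n+2) / qpoch q (q\<^sup>2) (n+1))" for n
    unfolding second_summand_eq using second_series_telescoping[OF q, of n] by (simp add: H_def)
  moreover have "(1 - q) * B / A = qpoch_inf (q ^ 4) (q ^ 4) / qpoch_inf (q\<^sup>2) q"
  proof -
    have "qpoch_inf q q = (1 - q) * qpoch_inf (q\<^sup>2) q"
      using qpoch_inf_shift[OF q, of q 1] by (simp add: qpoch_Suc power2_eq_square)
    moreover have "qpoch_inf q q \<noteq> 0" "1 - q \<noteq> 0"
      using q by (auto simp: qpoch_inf_nonzero)
    moreover have "B / A = qpoch_inf (q ^ 4) (q ^ 4) / qpoch_inf q q"
      using qpoch_inf_q_q_mult[OF q] A B \<open>qpoch_inf q q \<noteq> 0\<close>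
      by (simp add: A_def B_def field_simps)
    ultimately show ?thesis
      unfolding times_divide_eq_right[symmetric] by simp
  qed
  ultimately have "(\<lambda>n. (1 + q ^ 3) * (qpoch (- (q\<^sup>2)) (q\<^sup>2) n * q ^ (4*n+2) / qpoch q (q\<^sup>2) (n+1)))
      sums (qpoch_inf (q ^ 4) (q ^ 4) / qpoch_inf (q\<^sup>2) q - 1)"
    by simp
  from sums_mult[OF this, of "1 / (1 + q ^ 3)"] show ?thesis
    using one_plus_cube_nonzero[OF q] by simp
qed

theorem theorem2:
  fixes q :: complex
  assumes "norm q < 1"
  shows "((\<Sum>n. q ^ (2*n) * qpoch_inf (q ^ (4*n+4)) (q ^ 4) * qpoch q q (2*n+1))
           = 2 * (1 - q) * qpoch_inf (q ^ 4) (q ^ 4) / (1 + q ^ 3) - qpoch_inf q q / (1 + q ^ 3)) \<and>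
         ((1 + q ^ 3) * (\<Sum>n. qpoch (- (q ^ 2)) (q ^ 2) n * q ^ (4*n+2) / qpoch q (q ^ 2) (n+1))
           = qpoch_inf (q ^ 4) (q ^ 4) / qpoch_inf (q ^ 2) q - 1)"
proof
  show "(\<Sum>n. q ^ (2*n) * qpoch_inf (q ^ (4*n+4)) (q ^ 4) * qpoch q q (2*n+1))
      = 2 * (1 - q) * qpoch_inf (q ^ 4) (q ^ 4) / (1 + q ^ 3) - qpoch_inf q q / (1 + q ^ 3)"
    using first_series_sums[OF assms] by (rule sums_unique[symmetric])
  have "(\<Sum>n. qpoch (- (q ^ 2)) (q ^ 2) n * q ^ (4*n+2) / qpoch q (q ^ 2) (n+1))
      = (qpoch_inf (q ^ 4) (q ^ 4) / qpoch_inf (q ^ 2) q - 1) / (1 + q ^ 3)"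
    using second_series_sums[OF assms] by (rule sums_unique[symmetric])
  then show "(1 + q ^ 3) * (\<Sum>n. qpoch (- (q ^ 2)) (q ^ 2) n * q ^ (4*n+2) / qpoch q (q ^ 2) (n+1))
      = qpoch_inf (q ^ 4) (q ^ 4) / qpoch_inf (q ^ 2) q - 1"
    using one_plus_cube_nonzero[OF assms] by simp
qed

end
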